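(* Let $\mathcal{T}=\mathcal{X}=\mathcal{Y}=\{0,1\}$ and $P\in\Delta_{\mathcal{T},\mathcal{X},\mathcal{Y}}$ with $a=P(T=0)\in(0,1)$, and let $b,c,d,e$, $Q_0$, $g_1,g_2$ and the bounds $g_{i,\min},g_{i,\max}$ be as in the context. If $\tilde Q\in\arg\max_{Q\in\Delta_P}H_Q(T\mid X,Y)$ lies on the relative boundary of $\Delta_P$, then $\tilde Q$ has parameters $(g_1,g_2)=(g_{1,\min},g_{2,\min})$ or $(g_1,g_2)=(g_{1,\max},g_{2,\max})$.
   Context: $\Delta_P=\{Q: Q(X=x,T=t)=P(X=x,T=t),\ Q(Y=y,T=t)=P(Y=y,T=t)\ \forall x,y,t\}$. Parameters: $a=P(T=0)$, $b=P(X=0\mid T=0)$, $c=P(X=0\mid T=1)$, $d=P(Y=0\mid T=0)$, $e=P(Y=0\mid T=1)$. Every $Q\in\Delta_P$ can be written uniquely as $Q(0,x,y)=a\,(P(x\mid 0)P(y\mid 0)+\sigma(x,y)g_1)$ and $Q(1,x,y)=(1-a)(P(x\mid 1)P(y\mid 1)+\sigma(x,y)g_2)$, where $\sigma(x,y)=+1$ if $x=y$ and $-1$ if $x\neq y$; i.e. $Q=Q_0+a g_1\gamma_{0}+(1-a)g_2\gamma_1$ with $Q_0(t,x,y)=P(t)P(x\mid t)P(y\mid t)$ and $\gamma_t=\delta_{t,0,0}+\delta_{t,1,1}-\delta_{t,0,1}-\delta_{t,1,0}$. The admissible parameters form the rectangle $g_{1,\min}\le g_1\le g_{1,\max}$,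 $g_{2,\min}\le g_2\le g_{2,\max}$ with $g_{1,\min}=-\min\{bd,(1-b)(1-d)\}$, $g_{1,\max}=\min\{b(1-d),(1-b)d\}$, $g_{2,\min}=-\min\{ce,(1-c)(1-e)\}$, $g_{2,\max}=\min\{c(1-e),(1-c)e\}$. *)

theory Defs
  imports "HOL-Analysis.Analysis"
begin

text \<open>Joint distributions of (T,X,Y) on {0,1}^3, represented as vectors in
  real ^ (2 \<times> 2 \<times> 2); the entry Q $ (t,x,y) is Q(T=t,X=x,Y=y).\<close>

type_synonym dist3 = "real ^ (2 \<times> 2 \<times> 2)"

definition prob_dist :: "dist3 \<Rightarrow> bool" where
  "prob_dist Q \<longleftrightarrow> (\<forall>i. Q $ i \<ge> 0) \<and> (\<Sum>i\<in>UNIV. Q $ i) = 1"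

definition pTX :: "dist3 \<Rightarrow> 2 \<Rightarrow> 2 \<Rightarrow> real" where
  "pTX Q t x = (\<Sum>y\<in>UNIV. Q $ (t, x, y))"

definition pTY :: "dist3 \<Rightarrow> 2 \<Rightarrow> 2 \<Rightarrow> real" where
  "pTY Q t y = (\<Sum>x\<in>UNIV. Q $ (t, x, y))"

definition pT :: "dist3 \<Rightarrow> 2 \<Rightarrow> real" where
  "pT Q t = (\<Sum>x\<in>UNIV. \<Sum>y\<in>UNIV. Q $ (t, x, y))"

definition pXY :: "dist3 \<Rightarrow> 2 \<Rightarrow> 2 \<Rightarrow> real" where
  "pXY Q x y = (\<Sum>t\<in>UNIV. Q $ (t, x, y))"

definition DeltaP :: "dist3 \<Rightarrow> dist3 set" where
  "DeltaP P = {Q. prob_dist Q \<and> (\<forall>t x. pTX Q t x = pTX P t x) \<and> (\<forall>t y. pTY Q t y = pTY P t y)}"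

definition condEntT :: "dist3 \<Rightarrow> real" where
  "condEntT Q = - (\<Sum>i\<in>UNIV. case i of (t, x, y) \<Rightarrow>
      (if Q $ (t, x, y) = 0 then 0 else Q $ (t, x, y) * log 2 (Q $ (t, x, y) / pXY Q x y)))"

definition condX :: "dist3 \<Rightarrow> 2 \<Rightarrow> 2 \<Rightarrow> real" where
  "condX P t x = pTX P t x / pT P t"

definition condY :: "dist3 \<Rightarrow> 2 \<Rightarrow> 2 \<Rightarrow> real" where
  "condY P t y = pTY P t y / pT P t"

definition sgn2 :: "2 \<Rightarrow> 2 \<Rightarrow> real" where
  "sgn2 x y = (if x = y then 1 else -1)"

definition Qparam :: "dist3 \<Rightarrow> real \<Rightarrow> real \<Rightarrow> dist3" where
  "Qparam P g1 g2 = (\<chi> i. case i of (t, x, y) \<Rightarrow>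
      (if t = 0 then pT P 0 * (condX P 0 x * condY P 0 y + sgn2 x y * g1)
       else pT P 1 * (condX P 1 x * condY P 1 y + sgn2 x y * g2)))"

definition pa :: "dist3 \<Rightarrow> real" where "pa P = pT P 0"
definition pb :: "dist3 \<Rightarrow> real" where "pb P = condX P 0 0"
definition pc :: "dist3 \<Rightarrow> real" where "pc P = condX P 1 0"
definition pd :: "dist3 \<Rightarrow> real" where "pd P = condY P 0 0"
definition pe :: "dist3 \<Rightarrow> real" where "pe P = condY P 1 0"

definition g1min :: "dist3 \<Rightarrow> real" where
  "g1min P = - min (pb P * pd P) ((1 - pb P) * (1 - pd P))"
definition g1max :: "dist3 \<Rightarrow> real" where
  "g1max P = min (pb P * (1 - pd P)) ((1 - pb P) * pd P)"
definition g2min :: "dist3 \<Rightarrow> real" where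
  "g2min P = - min (pc P * pe P) ((1 - pc P) * (1 - pe P))"
definition g2max :: "dist3 \<Rightarrow> real" where
  "g2max P = min (pc P * (1 - pe P)) ((1 - pc P) * pe P)"

end

theory Submission
  imports Defs
begin

text \<open>
  Every \<open>Q \<in> \<Delta>\<^sub>P\<close> is \<open>Qparam P g1 g2\<close> for a parameter \<open>(g1, g2)\<close> in the rectangle,
  and the parametrisation is affine, so the relative boundary of \<open>\<Delta>\<^sub>P\<close> is the image of the
  relative boundary of the rectangle. If \<open>g1\<close> (say) is an endpoint of a nondegenerate side,
  some cell \<open>Q(0,x,y)\<close> vanishes although it is positive at the centre \<open>m\<close> of \<open>\<Delta>\<^sub>P\<close>; and
  unless \<open>Q\<close> is one of the two corners, all \<open>Q(X=x,Y=y)\<close> are positive. Writing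
  \<open>H\<^sub>Q(T|X,Y) ln 2 = \<Sum> \<eta>(Q(X=x,Y=y)) - \<Sum> \<eta>(Q(t,x,y))\<close> with \<open>\<eta>(s) = s ln s\<close>, the
  entropy along the segment from \<open>Q\<close> towards \<open>m\<close> has slope \<open>+\<infinity>\<close> at \<open>Q\<close>: the vanishing
  cell contributes \<open>-\<eta>(\<epsilon>\<beta>)\<close>, whose slope at \<open>\<epsilon> = 0\<close> is infinite, while every other
  term has a finite slope or one bounded below.
\<close>

lemma exhaust_2':
  obtains "x = (0::2)" | "x = 1"
  by (metis exhaust_2 zero_neq_one)

lemma UNIV_2': "(UNIV :: 2 set) = {0, 1}"
  using exhaust_2' by auto

lemma sum_2': "(\<Sum>x\<in>UNIV. f x) = f (0::2) + f 1"
  by (simp add: UNIV_2')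

lemma forall_2': "(\<forall>x::2. P x) \<longleftrightarrow> P 0 \<and> P 1"
  by (metis exhaust_2')

lemma sum_UNIV_triple:
  fixes f :: "'a::finite \<times> 'b::finite \<times> 'c::finite \<Rightarrow> 'd::comm_monoid_add"
  shows "(\<Sum>i\<in>UNIV. f i) = (\<Sum>t\<in>UNIV. \<Sum>x\<in>UNIV. \<Sum>y\<in>UNIV. f (t, x, y))"
  by (simp add: sum.cartesian_product flip: UNIV_Times_UNIV)

lemma sgn2_simps [simp]: "sgn2 x x = 1" "sgn2 0 1 = -1" "sgn2 1 0 = -1"
  by (simp_all add: sgn2_def)

section \<open>Couplings of two Bernoulli laws\<close>

definition bern :: "real \<Rightarrow> 2 \<Rightarrow> real" where
  "bern b x = (if x = 0 then b else 1 - b)"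

definition coupling :: "real \<Rightarrow> real \<Rightarrow> real \<Rightarrow> 2 \<Rightarrow> 2 \<Rightarrow> real" where
  "coupling b d g x y = bern b x * bern d y + sgn2 x y * g"

definition coupling_min :: "real \<Rightarrow> real \<Rightarrow> real" where
  "coupling_min b d = - min (b * d) ((1 - b) * (1 - d))"

definition coupling_max :: "real \<Rightarrow> real \<Rightarrow> real" where
  "coupling_max b d = min (b * (1 - d)) ((1 - b) * d)"

lemma coupling_simps [simp]:
  "coupling b d g 0 0 = b * d + g" "coupling b d g 0 1 = b * (1 - d) - g"
  "coupling b d g 1 0 = (1 - b) * d - g" "coupling b d g 1 1 = (1 - b) * (1 - d) + g"
  by (simp_all add: coupling_def bern_def)

lemma coupling_marginals [simp]:
  "(\<Sum>y\<in>UNIV. coupling b d g x y) = bern b x" "(\<Sum>x\<in>UNIV. coupling b d g x y) = bern d y"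
  by (cases x rule: exhaust_2'; cases y rule: exhaust_2'; simp add: sum_2' bern_def algebra_simps)+

lemma coupling_nonneg_iff:
  "(\<forall>x y. 0 \<le> coupling b d g x y) \<longleftrightarrow> g \<in> {coupling_min b d..coupling_max b d}"
  by (auto simp: forall_2' coupling_min_def coupling_max_def)

lemma coupling_unique:
  assumes "\<And>x. (\<Sum>y\<in>UNIV. q x y) = bern b x" and "\<And>y. (\<Sum>x\<in>UNIV. q x y) = bern d y"
  shows "q x y = coupling b d (q 0 0 - b * d) x y"
  using assms[of 0] assms[of 1]
  by (cases x rule: exhaust_2'; cases y rule: exhaust_2'; simp add: sum_2' bern_def algebra_simps)

lemma coupling_zero_imp_endpoint:
  assumes "\<forall>x y. 0 \<le> coupling b d g x y" and "coupling b d g x y = 0"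
  shows "g = (if x = y then coupling_min b d else coupling_max b d)"
  using assms
  by (cases x rule: exhaust_2'; cases y rule: exhaust_2')
    (auto simp: forall_2' coupling_min_def coupling_max_def)

lemma not_rel_interior_real_interval:
  fixes a b g :: real
  assumes "g \<in> {a..b}" and "g \<notin> rel_interior {a..b}"
  shows "a < b \<and> g \<in> {a, b}"
  using assms by (cases "a = b") auto

lemma coupling_zero_at_endpoint:
  assumes "g \<in> {coupling_min b d, coupling_max b d}" and "g' \<in> {coupling_min b d<..<coupling_max b d}"
  shows "\<exists>x y. coupling b d g x y = 0 \<and> 0 < coupling b d g' x y"
proof -
  consider "g = coupling_min b d" "b * d \<le> (1 - b) * (1 - d)"
    | "g = coupling_min b d" "(1 - b) * (1 - d) < b * d"
    | "g = coupling_max b d" "b * (1 - d) \<le> (1 - b) * d"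
    | "g = coupling_max b d" "(1 - b) * d < b * (1 - d)"
    using assms(1) by force
  then show ?thesis
  proof cases
    case 1
    then have "coupling b d g 0 0 = 0 \<and> 0 < coupling b d g' 0 0"
      using assms(2) by (auto simp: coupling_min_def coupling_max_def)
    then show ?thesis
      by blast
  next
    case 2
    then have "coupling b d g 1 1 = 0 \<and> 0 < coupling b d g' 1 1"
      using assms(2) by (auto simp: coupling_min_def coupling_max_def)
    then show ?thesis
      by blast
  next
    case 3
    then have "coupling b d g 0 1 = 0 \<and> 0 < coupling b d g' 0 1"
      using assms(2) by (auto simp: coupling_min_def coupling_max_def)
    then show ?thesis
      by blast
  next
    case 4
    then have "coupling b d g 1 0 = 0 \<and> 0 < coupling b d g' 1 0"
      using assms(2) by (auto simp: coupling_min_def coupling_max_def)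
    then show ?thesis
      by blast
  qed
qed

lemma coupling_zero_off_rel_interior:
  assumes "g \<in> {coupling_min b d..coupling_max b d}"
    and "g \<notin> rel_interior {coupling_min b d..coupling_max b d}"
  shows "\<exists>x y. coupling b d g x y = 0 \<and>
    0 < coupling b d ((coupling_min b d + coupling_max b d) / 2) x y"
  using not_rel_interior_real_interval[OF assms]
  by (intro coupling_zero_at_endpoint) auto

section \<open>Slope of the conditional entropy along a segment\<close>

definition xlnx :: "real \<Rightarrow> real" where
  "xlnx t = t * ln t"

lemma xlnx_0 [simp]: "xlnx 0 = 0"
  by (simp add: xlnx_def)

lemma log_cell_eq_xlnx:
  fixes q p :: real
  assumes "0 \<le> q" and "q \<le> p"
  shows "(if q = 0 then 0 else q * log 2 (q / p)) * ln 2 = xlnx q - q * ln p"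
  using assms by (auto simp: xlnx_def log_def ln_div field_simps)

lemma condEntT_eq_xlnx:
  assumes "\<forall>i. 0 \<le> Q $ i"
  shows "condEntT Q * ln 2 = (\<Sum>(x, y)\<in>UNIV. xlnx (pXY Q x y)) - (\<Sum>i\<in>UNIV. xlnx (Q $ i))"
proof -
  have "Q $ (t, x, y) \<le> pXY Q x y" for t x y
    unfolding pXY_def using assms by (intro member_le_sum) auto
  then have cell: "(case i of (t, x, y) \<Rightarrow> if Q $ (t, x, y) = 0 then 0
      else Q $ (t, x, y) * log 2 (Q $ (t, x, y) / pXY Q x y)) * ln 2
      = xlnx (Q $ i) - (case i of (t, x, y) \<Rightarrow> Q $ (t, x, y) * ln (pXY Q x y))" for i
    using assms by (auto simp: log_cell_eq_xlnx split: prod.split)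
  have "(\<Sum>i\<in>UNIV. case i of (t, x, y) \<Rightarrow> Q $ (t, x, y) * ln (pXY Q x y))
      = (\<Sum>t\<in>UNIV. \<Sum>(x, y)\<in>UNIV. Q $ (t, x, y) * ln (pXY Q x y))"
    by (simp add: sum.cartesian_product split_def flip: UNIV_Times_UNIV)
  also have "\<dots> = (\<Sum>(x, y)\<in>UNIV. xlnx (pXY Q x y))"
    by (subst sum.swap) (simp add: split_def xlnx_def pXY_def sum_distrib_right)
  finally show ?thesis
    unfolding condEntT_def by (simp add: sum_distrib_right cell sum_subtractf)
qed

lemma xlnx_slope_tendsto:
  assumes "0 < \<alpha>"
  shows "((\<lambda>\<epsilon>. (xlnx (\<alpha> + \<epsilon> * \<beta>) - xlnx \<alpha>) / \<epsilon>) \<longlongrightarrow> \<beta> * (ln \<alpha> + 1)) (at_right 0)"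
proof -
  have "((\<lambda>\<epsilon>. xlnx (\<alpha> + \<epsilon> * \<beta>)) has_field_derivative \<beta> * (ln \<alpha> + 1)) (at 0)"
    unfolding xlnx_def using assms by (auto intro!: derivative_eq_intros simp: field_simps)
  then have "((\<lambda>\<epsilon>. xlnx (\<alpha> + \<epsilon> * \<beta>)) has_field_derivative \<beta> * (ln \<alpha> + 1)) (at_right 0)"
    by (rule has_field_derivative_at_within)
  then show ?thesis
    by (simp add: has_field_derivative_iff)
qed

lemma neg_xlnx_slope_at_top:
  assumes "0 < \<beta>"
  shows "LIM \<epsilon> at_right 0. - xlnx (\<epsilon> * \<beta>) / \<epsilon> :> at_top"
proof -
  have "LIM \<epsilon> at_right 0. - ln (\<epsilon> :: real) :> at_top"
    using ln_at_0 by (simp add: filterlim_uminus_at_bot)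
  then have "LIM \<epsilon> at_right 0. - (\<beta> * ln \<beta>) + \<beta> * - ln \<epsilon> :> at_top"
    using assms by (intro filterlim_tendsto_add_at_top filterlim_tendsto_pos_mult_at_top) auto
  moreover have "\<forall>\<^sub>F \<epsilon> in at_right 0. - (\<beta> * ln \<beta>) + \<beta> * - ln \<epsilon> \<le> - xlnx (\<epsilon> * \<beta>) / \<epsilon>"
    using eventually_at_right_less
    by eventually_elim (use assms in \<open>simp add: xlnx_def ln_mult field_simps\<close>)
  ultimately show ?thesis
    by (rule filterlim_at_top_mono)
qed

lemma filterlim_sum_at_top:
  fixes f :: "'i \<Rightarrow> 'a \<Rightarrow> real"
  assumes "finite I" and "i \<in> I" and "LIM x F. f i x :> at_top"
    and "\<And>j. j \<in> I - {i} \<Longrightarrow> \<exists>c. \<forall>\<^sub>F x in F. c \<le> f j x"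
  shows "LIM x F. (\<Sum>j\<in>I. f j x) :> at_top"
proof -
  obtain c where c: "\<And>j. j \<in> I - {i} \<Longrightarrow> \<forall>\<^sub>F x in F. c j \<le> f j x"
    using assms(4) by metis
  have lim: "LIM x F. (\<Sum>j\<in>I - {i}. c j) + f i x :> at_top"
    using assms(3) by (rule filterlim_tendsto_add_at_top[OF tendsto_const])
  have "\<forall>\<^sub>F x in F. \<forall>j\<in>I - {i}. c j \<le> f j x"
    using assms(1) c by (intro eventually_ball_finite) auto
  then have "\<forall>\<^sub>F x in F. (\<Sum>j\<in>I - {i}. c j) + f i x \<le> (\<Sum>j\<in>I. f j x)"
  proof eventually_elim
    case (elim x)
    then have "(\<Sum>j\<in>I - {i}. c j) \<le> (\<Sum>j\<in>I - {i}. f j x)"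
      by (intro sum_mono) auto
    then show ?case
      using assms(1,2) by (simp add: sum.remove)
  qed
  with lim show ?thesis
    by (rule filterlim_at_top_mono)
qed

lemma sum_neg_xlnx_slopes_at_top:
  fixes q m :: "'i \<Rightarrow> real"
  assumes "finite I" and "i0 \<in> I" and "\<forall>i\<in>I. 0 \<le> q i" and "\<forall>i\<in>I. 0 \<le> m i"
    and "q i0 = 0" and "0 < m i0"
  shows "LIM \<epsilon> at_right 0. (\<Sum>i\<in>I. - ((xlnx (q i + \<epsilon> * (m i - q i)) - xlnx (q i)) / \<epsilon>)) :> at_top"
proof (rule filterlim_sum_at_top[OF assms(1,2)])
  show "LIM \<epsilon> at_right 0. - ((xlnx (q i0 + \<epsilon> * (m i0 - q i0)) - xlnx (q i0)) / \<epsilon>) :> at_top"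
    using neg_xlnx_slope_at_top[OF assms(6)] assms(5) by (simp add: mult.commute)
  fix i
  assume "i \<in> I - {i0}"
  then have "0 \<le> q i" and "0 \<le> m i"
    using assms(3,4) by auto
  show "\<exists>c. \<forall>\<^sub>F \<epsilon> in at_right 0. c \<le> - ((xlnx (q i + \<epsilon> * (m i - q i)) - xlnx (q i)) / \<epsilon>)"
  proof (cases "q i = 0")
    case False
    with \<open>0 \<le> q i\<close> have "((\<lambda>\<epsilon>. - ((xlnx (q i + \<epsilon> * (m i - q i)) - xlnx (q i)) / \<epsilon>))
        \<longlongrightarrow> - ((m i - q i) * (ln (q i) + 1))) (at_right 0)"
      by (intro tendsto_minus xlnx_slope_tendsto) simp
    then have "\<forall>\<^sub>F \<epsilon> in at_right 0.
        - ((m i - q i) * (ln (q i) + 1)) - 1 < - ((xlnx (q i + \<epsilon> * (m i - q i)) - xlnx (q i)) / \<epsilon>)"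
      by (rule order_tendstoD(1)) simp
    then show ?thesis
      by (blast intro: eventually_mono less_imp_le)
  next
    case True
    show ?thesis
    proof (cases "m i = 0")
      case False
      with \<open>0 \<le> m i\<close> True
      have "LIM \<epsilon> at_right 0. - ((xlnx (q i + \<epsilon> * (m i - q i)) - xlnx (q i)) / \<epsilon>) :> at_top"
        using neg_xlnx_slope_at_top[of "m i"] by (simp add: mult.commute)
      then show ?thesis
        unfolding filterlim_at_top by blast
    qed (use True in \<open>auto intro: exI[of _ 0]\<close>)
  qed
qed

lemma condEntT_increases_towards_zero_cell:
  fixes q m :: dist3
  assumes q_nonneg: "\<forall>i. 0 \<le> q $ i" and m_nonneg: "\<forall>i. 0 \<le> m $ i"
    and pXY_pos: "\<forall>x y. 0 < pXY q x y"
    and "q $ i0 = 0" and "0 < m $ i0"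
  shows "\<exists>\<epsilon>. 0 < \<epsilon> \<and> \<epsilon> < 1 \<and> condEntT q < condEntT ((1 - \<epsilon>) *\<^sub>R q + \<epsilon> *\<^sub>R m)"
proof -
  define Q where "Q \<epsilon> = (1 - \<epsilon>) *\<^sub>R q + \<epsilon> *\<^sub>R m" for \<epsilon>
  define H where "H \<epsilon> = condEntT (Q \<epsilon>) * ln 2" for \<epsilon>
  define slopeXY where "slopeXY \<epsilon> = (\<Sum>(x, y)\<in>UNIV.
    (xlnx (pXY q x y + \<epsilon> * (pXY m x y - pXY q x y)) - xlnx (pXY q x y)) / \<epsilon>)" for \<epsilon>
  define slope where "slope i \<epsilon> = - ((xlnx (q $ i + \<epsilon> * (m $ i - q $ i)) - xlnx (q $ i)) / \<epsilon>)" for i \<epsilon>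
  have Q_nth: "Q \<epsilon> $ i = q $ i + \<epsilon> * (m $ i - q $ i)" for \<epsilon> i
    by (simp add: Q_def algebra_simps)
  have pXY_Q: "pXY (Q \<epsilon>) x y = pXY q x y + \<epsilon> * (pXY m x y - pXY q x y)" for \<epsilon> x y
    by (simp add: pXY_def Q_nth sum.distrib right_diff_distrib sum_subtractf sum_distrib_left)
  have H_diff: "H \<epsilon> - H 0 = \<epsilon> * (slopeXY \<epsilon> + (\<Sum>i\<in>UNIV. slope i \<epsilon>))" if "0 < \<epsilon>" "\<epsilon> < 1" for \<epsilon>
  proof -
    have "\<forall>i. 0 \<le> Q \<epsilon> $ i"
      using that q_nonneg m_nonneg by (simp add: Q_def)
    then have "H \<epsilon> = (\<Sum>(x, y)\<in>UNIV. xlnx (pXY (Q \<epsilon>) x y)) - (\<Sum>i\<in>UNIV. xlnx (Q \<epsilon> $ i))"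
      unfolding H_def by (rule condEntT_eq_xlnx)
    moreover have "H 0 = (\<Sum>(x, y)\<in>UNIV. xlnx (pXY q x y)) - (\<Sum>i\<in>UNIV. xlnx (q $ i))"
      unfolding H_def Q_def using q_nonneg by (simp add: condEntT_eq_xlnx)
    moreover have "\<epsilon> * slopeXY \<epsilon> = (\<Sum>(x, y)\<in>UNIV. xlnx (pXY (Q \<epsilon>) x y)) - (\<Sum>(x, y)\<in>UNIV. xlnx (pXY q x y))"
      using that by (simp add: slopeXY_def pXY_Q split_def sum_distrib_left sum_subtractf)
    moreover have "\<epsilon> * (\<Sum>i\<in>UNIV. slope i \<epsilon>) = (\<Sum>i\<in>UNIV. xlnx (q $ i)) - (\<Sum>i\<in>UNIV. xlnx (Q \<epsilon> $ i))"
      using that by (simp add: slope_def Q_nth sum_distrib_left sum_subtractf)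
    ultimately show ?thesis
      by (simp add: algebra_simps)
  qed
  have "((\<lambda>\<epsilon>. slopeXY \<epsilon>) \<longlongrightarrow> (\<Sum>(x, y)\<in>UNIV. (pXY m x y - pXY q x y) * (ln (pXY q x y) + 1)))
      (at_right 0)"
    unfolding slopeXY_def split_def using pXY_pos
    by (intro tendsto_sum xlnx_slope_tendsto) auto
  moreover have "LIM \<epsilon> at_right 0. (\<Sum>i\<in>UNIV. slope i \<epsilon>) :> at_top"
    unfolding slope_def using assms by (intro sum_neg_xlnx_slopes_at_top) auto
  ultimately have "LIM \<epsilon> at_right 0. slopeXY \<epsilon> + (\<Sum>i\<in>UNIV. slope i \<epsilon>) :> at_top"
    by (rule filterlim_tendsto_add_at_top)
  then have "\<forall>\<^sub>F \<epsilon> in at_right 0. 0 < slopeXY \<epsilon> + (\<Sum>i\<in>UNIV. slope i \<epsilon>)"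
    unfolding filterlim_at_top_dense by blast
  moreover have "\<forall>\<^sub>F \<epsilon> in at_right 0. 0 < \<epsilon> \<and> \<epsilon> < (1::real)"
    by (simp add: eventually_at_right_field) (metis zero_less_one)
  ultimately obtain \<epsilon> where "0 < \<epsilon>" "\<epsilon> < 1" and "0 < slopeXY \<epsilon> + (\<Sum>i\<in>UNIV. slope i \<epsilon>)"
    using eventually_happens'[OF trivial_limit_at_right_real eventually_conj] by blast
  then have "H 0 < H \<epsilon>"
    using H_diff[of \<epsilon>] mult_pos_pos[of \<epsilon> "slopeXY \<epsilon> + (\<Sum>i\<in>UNIV. slope i \<epsilon>)"] by linarith
  then show ?thesis
    using \<open>0 < \<epsilon>\<close> \<open>\<epsilon> < 1\<close> by (auto simp: H_def Q_def)
qed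

section \<open>The parametrisation of \<open>\<Delta>\<^sub>P\<close>\<close>

lemma sum_bern [simp]: "(\<Sum>x\<in>UNIV. bern b x) = 1"
  by (simp add: sum_2' bern_def)

locale nondegenerate_T =
  fixes P :: dist3
  assumes prob_dist_P: "prob_dist P" and pa_pos: "0 < pa P" and pa_less_1: "pa P < 1"
begin

lemma pT_eq: "pT P t = (if t = 0 then pa P else 1 - pa P)"
proof -
  have "pT P 0 + pT P 1 = 1"
    using prob_dist_P by (simp add: prob_dist_def pT_def sum_UNIV_triple sum_2')
  then show ?thesis
    by (cases t rule: exhaust_2') (auto simp: pa_def)
qed

lemma pT_pos: "0 < pT P t"
  using pa_pos pa_less_1 by (simp add: pT_eq)

lemma pTX_eq: "pTX P t x = pT P t * bern (condX P t 0) x"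
proof -
  have "pTX P t 0 + pTX P t 1 = pT P t"
    by (simp add: pTX_def pT_def sum_2')
  then show ?thesis
    using pT_pos[of t] by (cases x rule: exhaust_2') (auto simp: condX_def bern_def right_diff_distrib)
qed

lemma pTY_eq: "pTY P t y = pT P t * bern (condY P t 0) y"
proof -
  have "pTY P t 0 + pTY P t 1 = pT P t"
    by (simp add: pTY_def pT_def sum_2' sum.distrib)
  then show ?thesis
    using pT_pos[of t] by (cases y rule: exhaust_2') (auto simp: condY_def bern_def right_diff_distrib)
qed

lemma condX_eq_bern: "condX P t x = bern (condX P t 0) x"
  using pT_pos[of t] by (simp add: condX_def pTX_eq[of t x])

lemma condY_eq_bern: "condY P t y = bern (condY P t 0) y"
  using pT_pos[of t] by (simp add: condY_def pTY_eq[of t y])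

lemma Qparam_nth:
  "Qparam P g1 g2 $ (t, x, y) =
    pT P t * coupling (condX P t 0) (condY P t 0) (if t = 0 then g1 else g2) x y"
  by (cases t rule: exhaust_2')
    (simp_all add: Qparam_def coupling_def flip: condX_eq_bern condY_eq_bern)

definition param_rect :: "(real \<times> real) set" where
  "param_rect = {g1min P..g1max P} \<times> {g2min P..g2max P}"

lemma g_bounds_as_coupling_bounds:
  "g1min P = coupling_min (condX P 0 0) (condY P 0 0)" "g1max P = coupling_max (condX P 0 0) (condY P 0 0)"
  "g2min P = coupling_min (condX P 1 0) (condY P 1 0)" "g2max P = coupling_max (condX P 1 0) (condY P 1 0)"
  by (simp_all add: g1min_def g1max_def g2min_def g2max_def coupling_min_def coupling_max_def
      pb_def pc_def pd_def pe_def)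

lemma mem_param_rect_iff:
  "(g1, g2) \<in> param_rect \<longleftrightarrow>
    (\<forall>x y. 0 \<le> coupling (condX P 0 0) (condY P 0 0) g1 x y) \<and>
    (\<forall>x y. 0 \<le> coupling (condX P 1 0) (condY P 1 0) g2 x y)"
  by (simp add: param_rect_def g_bounds_as_coupling_bounds coupling_nonneg_iff del: coupling_simps)

lemma Qparam_mem_DeltaP:
  assumes "(g1, g2) \<in> param_rect"
  shows "Qparam P g1 g2 \<in> DeltaP P"
proof -
  have "0 \<le> Qparam P g1 g2 $ (t, x, y)" for t x y
    using assms pT_pos[of t] unfolding mem_param_rect_iff Qparam_nth
    by (cases t rule: exhaust_2') (simp_all del: coupling_simps)
  then have "\<forall>i. 0 \<le> Qparam P g1 g2 $ i"
    by (simp add: split_paired_All)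
  moreover have "(\<Sum>i\<in>UNIV. Qparam P g1 g2 $ i) = 1"
    by (simp add: sum_UNIV_triple Qparam_nth del: coupling_simps flip: sum_distrib_left)
      (simp add: sum_2' pT_eq)
  moreover have "pTX (Qparam P g1 g2) t x = pTX P t x" for t x
    unfolding pTX_eq by (simp add: pTX_def Qparam_nth del: coupling_simps flip: sum_distrib_left)
  moreover have "pTY (Qparam P g1 g2) t y = pTY P t y" for t y
    unfolding pTY_eq by (simp add: pTY_def Qparam_nth del: coupling_simps flip: sum_distrib_left)
  ultimately show ?thesis
    by (simp add: DeltaP_def prob_dist_def)
qed

lemma DeltaP_eq_Qparam_image: "DeltaP P = (\<lambda>(g1, g2). Qparam P g1 g2) ` param_rect"
proof
  show "(\<lambda>(g1, g2). Qparam P g1 g2) ` param_rect \<subseteq> DeltaP P"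
    using Qparam_mem_DeltaP by auto
  show "DeltaP P \<subseteq> (\<lambda>(g1, g2). Qparam P g1 g2) ` param_rect"
  proof
    fix Q
    assume "Q \<in> DeltaP P"
    then have Q_nonneg: "\<forall>i. 0 \<le> Q $ i" and pTX_Q: "\<And>t x. pTX Q t x = pTX P t x"
      and pTY_Q: "\<And>t y. pTY Q t y = pTY P t y"
      by (auto simp: DeltaP_def prob_dist_def)
    define g where "g t = Q $ (t, 0, 0) / pT P t - condX P t 0 * condY P t 0" for t
    have normalized: "Q $ (t, x, y) / pT P t = coupling (condX P t 0) (condY P t 0) (g t) x y" for t x y
    proof -
      have "(\<Sum>y\<in>UNIV. Q $ (t, x, y) / pT P t) = bern (condX P t 0) x" for x
        using pTX_Q[of t x, unfolded pTX_eq] pT_pos[of t]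
        by (simp add: pTX_def[of Q] flip: sum_divide_distrib)
      moreover have "(\<Sum>x\<in>UNIV. Q $ (t, x, y) / pT P t) = bern (condY P t 0) y" for y
        using pTY_Q[of t y, unfolded pTY_eq] pT_pos[of t]
        by (simp add: pTY_def[of Q] flip: sum_divide_distrib)
      ultimately show ?thesis
        unfolding g_def by (rule coupling_unique)
    qed
    have Q_nth: "Q $ (t, x, y) = pT P t * coupling (condX P t 0) (condY P t 0) (g t) x y" for t x y
      using normalized[of t x y] pT_pos[of t] by (simp add: divide_eq_eq mult.commute)
    have "(if t = 0 then g 0 else g 1) = g t" for t :: 2
      by (cases t rule: exhaust_2') simp_all
    then have "Q = Qparam P (g 0) (g 1)"
      by (simp add: vec_eq_iff split_paired_All Qparam_nth Q_nth)
    moreover have "0 \<le> coupling (condX P t 0) (condY P t 0) (g t) x y" for t x y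
      using Q_nonneg Q_nth[of t x y] pT_pos[of t] by (metis zero_le_mult_iff not_le)
    then have "(g 0, g 1) \<in> param_rect"
      by (simp add: mem_param_rect_iff del: coupling_simps)
    ultimately show "Q \<in> (\<lambda>(g1, g2). Qparam P g1 g2) ` param_rect"
      by force
  qed
qed

lemma Qparam_affine_comb:
  assumes "u + v = 1"
  shows "u *\<^sub>R Qparam P g1 g2 + v *\<^sub>R Qparam P h1 h2 = Qparam P (u * g1 + v * h1) (u * g2 + v * h2)"
proof -
  have v: "v = 1 - u"
    using assms by simp
  have "(u *\<^sub>R Qparam P g1 g2 + v *\<^sub>R Qparam P h1 h2) $ (t, x, y) =
      Qparam P (u * g1 + v * h1) (u * g2 + v * h2) $ (t, x, y)" for t x y
    by (cases t rule: exhaust_2') (simp_all add: v Qparam_nth coupling_def algebra_simps del: coupling_simps)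
  then show ?thesis
    by (simp add: vec_eq_iff split_paired_All)
qed

lemma convex_DeltaP: "convex (DeltaP P)"
proof (rule convexI)
  fix Q R :: dist3 and u v :: real
  assume "Q \<in> DeltaP P" "R \<in> DeltaP P" and uv: "0 \<le> u" "0 \<le> v" "u + v = 1"
  then obtain g1 g2 h1 h2 where "Q = Qparam P g1 g2" "R = Qparam P h1 h2"
    and "(g1, g2) \<in> param_rect" "(h1, h2) \<in> param_rect"
    by (auto simp: DeltaP_eq_Qparam_image)
  moreover have "convex param_rect"
    by (simp add: param_rect_def convex_Times)
  ultimately have "(u * g1 + v * h1, u * g2 + v * h2) \<in> param_rect"
    using uv convexD[of param_rect "(g1, g2)" "(h1, h2)" u v] by simp
  then show "u *\<^sub>R Q + v *\<^sub>R R \<in> DeltaP P"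
    unfolding \<open>Q = _\<close> \<open>R = _\<close> Qparam_affine_comb[OF uv(3)] by (rule Qparam_mem_DeltaP)
qed

lemma rel_interior_DeltaP:
  "rel_interior (DeltaP P) = (\<lambda>(g1, g2). Qparam P g1 g2) `
    (rel_interior {g1min P..g1max P} \<times> rel_interior {g2min P..g2max P})"
proof -
  define Q0 where "Q0 = Qparam P 0 0"
  define L where "L g = fst g *\<^sub>R (Qparam P 1 0 - Q0) + snd g *\<^sub>R (Qparam P 0 1 - Q0)"
    for g :: "real \<times> real"
  have "Qparam P g1 g2 $ (t, x, y) = (Q0 + L (g1, g2)) $ (t, x, y)" for g1 g2 t x y
    by (cases t rule: exhaust_2') (simp_all add: Q0_def L_def Qparam_nth coupling_def algebra_simps)
  then have Qparam_affine: "(\<lambda>(g1, g2). Qparam P g1 g2) = (\<lambda>g. Q0 + L g)"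
    by (simp add: fun_eq_iff vec_eq_iff split_paired_All)
  have "linear L"
    unfolding L_def by (intro linearI) (auto simp: algebra_simps)
  moreover have "convex param_rect"
    by (simp add: param_rect_def convex_Times)
  ultimately have "rel_interior (L ` param_rect) = L ` rel_interior param_rect"
    by (simp add: rel_interior_convex_linear_image)
  moreover have "DeltaP P = (\<lambda>x. Q0 + x) ` L ` param_rect"
    by (simp add: DeltaP_eq_Qparam_image Qparam_affine image_image)
  ultimately have "rel_interior (DeltaP P) = (\<lambda>x. Q0 + x) ` L ` rel_interior param_rect"
    by (simp only: rel_interior_translation)
  then show ?thesis
    by (simp add: Qparam_affine image_image param_rect_def rel_interior_Times)
qed

lemma pXY_Qparam_pos:
  assumes "(g1, g2) \<in> param_rect"
    and "(g1, g2) \<noteq> (g1min P, g2min P)" and "(g1, g2) \<noteq> (g1max P, g2max P)"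
  shows "0 < pXY (Qparam P g1 g2) x y"
proof (rule ccontr)
  let ?c0 = "coupling (condX P 0 0) (condY P 0 0) g1" and ?c1 = "coupling (condX P 1 0) (condY P 1 0) g2"
  have nonneg: "\<forall>x y. 0 \<le> ?c0 x y" "\<forall>x y. 0 \<le> ?c1 x y"
    using assms(1) by (simp_all add: mem_param_rect_iff del: coupling_simps)
  have "pXY (Qparam P g1 g2) x y = pT P 0 * ?c0 x y + pT P 1 * ?c1 x y"
    by (simp add: pXY_def sum_2' Qparam_nth del: coupling_simps)
  moreover have "0 \<le> pT P 0 * ?c0 x y" and "0 \<le> pT P 1 * ?c1 x y"
    using nonneg pT_pos[of 0] pT_pos[of 1] by simp_all
  moreover assume "\<not> 0 < pXY (Qparam P g1 g2) x y"
  ultimately have "pT P 0 * ?c0 x y = 0" and "pT P 1 * ?c1 x y = 0"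
    by linarith+
  then have "?c0 x y = 0" and "?c1 x y = 0"
    using pT_pos[of 0] pT_pos[of 1] by simp_all
  then have "g1 = (if x = y then g1min P else g1max P)" and "g2 = (if x = y then g2min P else g2max P)"
    unfolding g_bounds_as_coupling_bounds using coupling_zero_imp_endpoint nonneg by blast+
  then show False
    using assms(2,3) by (simp split: if_splits)
qed

lemma zero_cell_off_rel_interior:
  assumes "(g1, g2) \<in> param_rect" and "Qparam P g1 g2 \<notin> rel_interior (DeltaP P)"
  shows "\<exists>i. Qparam P g1 g2 $ i = 0 \<and>
    0 < Qparam P ((g1min P + g1max P) / 2) ((g2min P + g2max P) / 2) $ i"
proof -
  have "Qparam P g1 g2 \<in> rel_interior (DeltaP P)"
    if "g1 \<in> rel_interior {g1min P..g1max P}" and "g2 \<in> rel_interior {g2min P..g2max P}"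
    unfolding rel_interior_DeltaP using that by (intro image_eqI[of _ _ "(g1, g2)"]) auto
  with assms(2)
  have "g1 \<notin> rel_interior {g1min P..g1max P} \<or> g2 \<notin> rel_interior {g2min P..g2max P}"
    by blast
  then show ?thesis
  proof
    assume "g1 \<notin> rel_interior {g1min P..g1max P}"
    then obtain x y where "coupling (condX P 0 0) (condY P 0 0) g1 x y = 0"
      "0 < coupling (condX P 0 0) (condY P 0 0) ((g1min P + g1max P) / 2) x y"
      using coupling_zero_off_rel_interior[of g1 "condX P 0 0" "condY P 0 0"] assms(1)
      by (auto simp: param_rect_def g_bounds_as_coupling_bounds)
    then show ?thesis
      using pT_pos[of 0] by (intro exI[of _ "(0, x, y)"]) (simp add: Qparam_nth del: coupling_simps)
  next
    assume "g2 \<notin> rel_interior {g2min P..g2max P}"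
    then obtain x y where "coupling (condX P 1 0) (condY P 1 0) g2 x y = 0"
      "0 < coupling (condX P 1 0) (condY P 1 0) ((g2min P + g2max P) / 2) x y"
      using coupling_zero_off_rel_interior[of g2 "condX P 1 0" "condY P 1 0"] assms(1)
      by (auto simp: param_rect_def g_bounds_as_coupling_bounds)
    then show ?thesis
      using pT_pos[of 1] by (intro exI[of _ "(1, x, y)"]) (simp add: Qparam_nth del: coupling_simps)
  qed
qed

end

theorem mainTheorem18:
  fixes P Qt :: dist3
  assumes "prob_dist P"
    and "0 < pa P" and "pa P < 1"
    and "Qt \<in> DeltaP P"
    and "\<forall>Q\<in>DeltaP P. condEntT Q \<le> condEntT Qt"
    and "Qt \<in> rel_frontier (DeltaP P)"
  shows "Qt = Qparam P (g1min P) (g2min P) \<or> Qt = Qparam P (g1max P) (g2max P)"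
proof (rule ccontr)
  assume not_corner: "\<not> ?thesis"
  interpret nondegenerate_T P
    using assms(1-3) by unfold_locales
  obtain g1 g2 where Qt: "Qt = Qparam P g1 g2" and g: "(g1, g2) \<in> param_rect"
    using assms(4) by (auto simp: DeltaP_eq_Qparam_image)
  define m where "m = Qparam P ((g1min P + g1max P) / 2) ((g2min P + g2max P) / 2)"
  have "Qparam P g1 g2 \<notin> rel_interior (DeltaP P)"
    using assms(6) unfolding Qt by (simp add: rel_frontier_def)
  then obtain i0 where "Qt $ i0 = 0" and "0 < m $ i0"
    using zero_cell_off_rel_interior[OF g] unfolding Qt m_def by blast
  moreover have "(g1, g2) \<noteq> (g1min P, g2min P)" and "(g1, g2) \<noteq> (g1max P, g2max P)"
    using not_corner unfolding Qt by auto
  then have "\<forall>x y. 0 < pXY Qt x y"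
    unfolding Qt using pXY_Qparam_pos[OF g] by blast
  moreover have "m \<in> DeltaP P"
    unfolding m_def using g by (intro Qparam_mem_DeltaP) (auto simp: param_rect_def)
  moreover have "\<forall>i. 0 \<le> Qt $ i" and "\<forall>i. 0 \<le> m $ i"
    using assms(4) \<open>m \<in> DeltaP P\<close> by (simp_all add: DeltaP_def prob_dist_def)
  ultimately obtain \<epsilon> where "0 < \<epsilon>" "\<epsilon> < 1"
    and gain: "condEntT Qt < condEntT ((1 - \<epsilon>) *\<^sub>R Qt + \<epsilon> *\<^sub>R m)"
    using condEntT_increases_towards_zero_cell by blast
  have "(1 - \<epsilon>) *\<^sub>R Qt + \<epsilon> *\<^sub>R m \<in> DeltaP P"
    using convexD[OF convex_DeltaP assms(4) \<open>m \<in> DeltaP P\<close>] \<open>0 < \<epsilon>\<close> \<open>\<epsilon> < 1\<close> by simp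
  then show False
    using assms(5) gain by fastforce
qed

end
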